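(* Let $\mathcal{F}=(W,\preceq,\mathcal{V})$ be a finite poset model and $w_1,w_2\in W$. If $w_1\equiv_\gamma w_2$ then $w_1\equiv_\eta w_2$.
   Context: Fix a set PL of proposition letters. A poset model is $\mathcal{F}=(W,\preceq,\mathcal{V})$ with $(W,\preceq)$ a partial order and $\mathcal{V}:\mathrm{PL}\to\mathcal{P}(W)$. For $m,n\in\mathbb{N}$, $[m;n]=\{i: m\le i\le n\}$, $[m;n)=\{i:m\le i<n\}$, $(m;n)=\{i:m<i<n\}$. An undirected path of length $\ell$ from $w$ is $\pi:[0;\ell]\to W$ with $\pi(0)=w$ and, for each $i\in[0;\ell)$, $\pi(i)\preceq\pi(i+1)$ or $\pi(i+1)\preceq\pi(i)$. A $\pm$-path is an undirected path of length $\ell\ge2$ with $\pi(0)\preceq\pi(1)$ and $\pi(\ell)\preceq\pi(\ell-1)$. Formulas are built by $\Phi::=p\mid\neg\Phi\mid\Phi_1\wedge\Phi_2\mid M(\Phi_1,\Phi_2)$, $p\in\mathrm{PL}$, with $M=\eta$ in SLCS$_\eta$ and $M=\gamma$ in SLCS$_\gamma$. Semantics on $\mathcal{F}$: $w\models p$ iff $w\in\mathcal{V}(p)$; negation and conjunction as usual; $w\models\gamma(\Phi_1,\Phi_2)$ iff there is a $\pm$-path $\pi:[0;\ell]\to W$ from $w$ with $\pi(\ell)\models\Phi_2$ and $\pi(i)\models\Phi_1$ for all $i\in(0;\ell)$; $w\models\eta(\Phi_1,\Phi_2)$ iff there is a $\pm$-path $\pi:[0;\ell]\to W$ from $w$ with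 $\pi(\ell)\models\Phi_2$ and $\pi(i)\models\Phi_1$ for all $i\in[0;\ell)$. $w_1\equiv_\gamma w_2$ (resp. $\equiv_\eta$) means $w_1,w_2$ satisfy the same SLCS$_\gamma$ (resp. SLCS$_\eta$) formulas in $\mathcal{F}$. *)

theory Defs
  imports Main
begin

definition poset_model :: "'a set \<Rightarrow> ('a \<Rightarrow> 'a \<Rightarrow> bool) \<Rightarrow> ('p \<Rightarrow> 'a set) \<Rightarrow> bool" where
  "poset_model W le V \<longleftrightarrow>
     (\<forall>x\<in>W. le x x) \<and>
     (\<forall>x\<in>W. \<forall>y\<in>W. le x y \<and> le y x \<longrightarrow> x = y) \<and>
     (\<forall>x\<in>W. \<forall>y\<in>W. \<forall>z\<in>W. le x y \<and> le y z \<longrightarrow> le x z) \<and>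
     (\<forall>p. V p \<subseteq> W)"

definition undirected_path :: "'a set \<Rightarrow> ('a \<Rightarrow> 'a \<Rightarrow> bool) \<Rightarrow> (nat \<Rightarrow> 'a) \<Rightarrow> nat \<Rightarrow> bool" where
  "undirected_path W le \<pi> l \<longleftrightarrow>
     (\<forall>i\<le>l. \<pi> i \<in> W) \<and> (\<forall>i<l. le (\<pi> i) (\<pi> (Suc i)) \<or> le (\<pi> (Suc i)) (\<pi> i))"

definition pm_path :: "'a set \<Rightarrow> ('a \<Rightarrow> 'a \<Rightarrow> bool) \<Rightarrow> (nat \<Rightarrow> 'a) \<Rightarrow> nat \<Rightarrow> bool" where
  "pm_path W le \<pi> l \<longleftrightarrow>
     undirected_path W le \<pi> l \<and> 2 \<le> l \<and> le (\<pi> 0) (\<pi> 1) \<and> le (\<pi> l) (\<pi> (l - 1))"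

datatype 'p gform = GAtom 'p | GNot "'p gform" | GAnd "'p gform" "'p gform" | Gamma "'p gform" "'p gform"
datatype 'p eform = EAtom 'p | ENot "'p eform" | EAnd "'p eform" "'p eform" | Eta "'p eform" "'p eform"

fun sat_gamma :: "'a set \<Rightarrow> ('a \<Rightarrow> 'a \<Rightarrow> bool) \<Rightarrow> ('p \<Rightarrow> 'a set) \<Rightarrow> 'a \<Rightarrow> 'p gform \<Rightarrow> bool" where
  "sat_gamma W le V w (GAtom p) = (w \<in> V p)"
| "sat_gamma W le V w (GNot f) = (\<not> sat_gamma W le V w f)"
| "sat_gamma W le V w (GAnd f g) = (sat_gamma W le V w f \<and> sat_gamma W le V w g)"
| "sat_gamma W le V w (Gamma f g) =
     (\<exists>\<pi> l. pm_path W le \<pi> l \<and> \<pi> 0 = w \<and> sat_gamma W le V (\<pi> l) g \<and>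
            (\<forall>i. 0 < i \<and> i < l \<longrightarrow> sat_gamma W le V (\<pi> i) f))"

fun sat_eta :: "'a set \<Rightarrow> ('a \<Rightarrow> 'a \<Rightarrow> bool) \<Rightarrow> ('p \<Rightarrow> 'a set) \<Rightarrow> 'a \<Rightarrow> 'p eform \<Rightarrow> bool" where
  "sat_eta W le V w (EAtom p) = (w \<in> V p)"
| "sat_eta W le V w (ENot f) = (\<not> sat_eta W le V w f)"
| "sat_eta W le V w (EAnd f g) = (sat_eta W le V w f \<and> sat_eta W le V w g)"
| "sat_eta W le V w (Eta f g) =
     (\<exists>\<pi> l. pm_path W le \<pi> l \<and> \<pi> 0 = w \<and> sat_eta W le V (\<pi> l) g \<and>
            (\<forall>i. i < l \<longrightarrow> sat_eta W le V (\<pi> i) f))"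

definition gamma_equiv :: "'a set \<Rightarrow> ('a \<Rightarrow> 'a \<Rightarrow> bool) \<Rightarrow> ('p \<Rightarrow> 'a set) \<Rightarrow> 'a \<Rightarrow> 'a \<Rightarrow> bool" where
  "gamma_equiv W le V w1 w2 \<longleftrightarrow> (\<forall>f. sat_gamma W le V w1 f = sat_gamma W le V w2 f)"

definition eta_equiv :: "'a set \<Rightarrow> ('a \<Rightarrow> 'a \<Rightarrow> bool) \<Rightarrow> ('p \<Rightarrow> 'a set) \<Rightarrow> 'a \<Rightarrow> 'a \<Rightarrow> bool" where
  "eta_equiv W le V w1 w2 \<longleftrightarrow> (\<forall>f. sat_eta W le V w1 f = sat_eta W le V w2 f)"

end

theory Submission
  imports Defs
begin

text \<open>Every SLCS\<open>\<^sub>\<eta>\<close> formula is expressible in SLCS\<open>\<^sub>\<gamma>\<close>, since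
  \<open>\<eta>(\<Phi>\<^sub>1, \<Phi>\<^sub>2)\<close> is equivalent to \<open>\<Phi>\<^sub>1 \<and> \<gamma>(\<Phi>\<^sub>1, \<Phi>\<^sub>2)\<close>: the two differ only in
  whether the start point of the \<open>\<plusminus>\<close>-path must satisfy \<open>\<Phi>\<^sub>1\<close>. Hence a formula
  distinguishing two points in SLCS\<open>\<^sub>\<eta>\<close> translates into one distinguishing them in
  SLCS\<open>\<^sub>\<gamma>\<close>.\<close>

fun eta_to_gamma :: "'p eform \<Rightarrow> 'p gform" where
  "eta_to_gamma (EAtom p) = GAtom p"
| "eta_to_gamma (ENot f) = GNot (eta_to_gamma f)"
| "eta_to_gamma (EAnd f g) = GAnd (eta_to_gamma f) (eta_to_gamma g)"
| "eta_to_gamma (Eta f g) = GAnd (eta_to_gamma f) (Gamma (eta_to_gamma f) (eta_to_gamma g))"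

lemma pm_path_length_pos: "pm_path W le \<pi> l \<Longrightarrow> 0 < l"
  unfolding pm_path_def by simp

lemma sat_eta_Eta_iff:
  "sat_eta W le V w (Eta f g) \<longleftrightarrow>
     sat_eta W le V w f \<and>
     (\<exists>\<pi> l. pm_path W le \<pi> l \<and> \<pi> 0 = w \<and> sat_eta W le V (\<pi> l) g \<and>
            (\<forall>i. 0 < i \<and> i < l \<longrightarrow> sat_eta W le V (\<pi> i) f))"
  (is "?eta \<longleftrightarrow> ?start \<and> ?gamma")
proof
  assume ?eta
  then obtain \<pi> l where "pm_path W le \<pi> l" "\<pi> 0 = w" "sat_eta W le V (\<pi> l) g"
    and "\<forall>i<l. sat_eta W le V (\<pi> i) f"
    by auto
  moreover have "0 < l" using \<open>pm_path W le \<pi> l\<close> by (rule pm_path_length_pos)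
  ultimately show "?start \<and> ?gamma" by auto
next
  assume "?start \<and> ?gamma"
  then obtain \<pi> l where "pm_path W le \<pi> l" "\<pi> 0 = w" "sat_eta W le V (\<pi> l) g"
    and "sat_eta W le V (\<pi> 0) f" and inner: "\<forall>i. 0 < i \<and> i < l \<longrightarrow> sat_eta W le V (\<pi> i) f"
    by auto
  moreover have "\<forall>i<l. sat_eta W le V (\<pi> i) f"
    using \<open>sat_eta W le V (\<pi> 0) f\<close> inner by (metis gr0I)
  ultimately show ?eta by auto
qed

lemma sat_gamma_eta_to_gamma:
  "sat_gamma W le V w (eta_to_gamma f) \<longleftrightarrow> sat_eta W le V w f"
  by (induction f arbitrary: w) (simp_all add: sat_eta_Eta_iff del: sat_eta.simps(4))

lemma gamma_equiv_imp_eta_equiv: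
  "gamma_equiv W le V w1 w2 \<Longrightarrow> eta_equiv W le V w1 w2"
  unfolding gamma_equiv_def eta_equiv_def by (metis sat_gamma_eta_to_gamma)

theorem proposition3:
  fixes W :: "'a set" and le :: "'a \<Rightarrow> 'a \<Rightarrow> bool" and V :: "'p \<Rightarrow> 'a set"
  assumes "poset_model W le V" and "finite W"
    and "w1 \<in> W" and "w2 \<in> W"
    and "gamma_equiv W le V w1 w2"
  shows "eta_equiv W le V w1 w2"
  using assms(5) by (rule gamma_equiv_imp_eta_equiv)

end
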